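(* Let $k$ be a field, $A=kQ_A/I_A$ a monomial algebra with vertices $e_1,\dots,e_n$, and $B$ the algebra obtained by gluing the distinct non-isolated vertices $e_1,e_n$. Assume that for every loop $\alpha$ at $e_1$ or $e_n$ with $\alpha^m\in Z_A$ for some $m\ge2$, $\mathrm{char}(k)\nmid m$. Then $\psi_1$ maps $\mathrm{Ker}(\delta^1_A)$ into $\mathrm{Ker}(\delta^1_B)$, and the induced map $\mathrm{Ker}(\delta^1_A)\hookrightarrow\mathrm{Ker}(\delta^1_B)$ is an injective (restricted) Lie algebra homomorphism.
   Context: Monomial algebra: $A=kQ_A/I_A$, $Q_A$ finite quiver, $I_A$ admissible, generated by a minimal set $Z_A$ of paths of length $\ge2$; $\mathcal B_A$: paths (including trivial ones) avoiding elements of $Z_A$ as subpaths, a basis of $A$. Gluing: $B\subseteq A$ generated by $f_1=e_1+e_n$, $f_i=e_i$ ($2\le i\le n-1$) and all arrows; $B\cong kQ_B/I_B$, $Q_B$ obtained by identifying $e_1,e_n$ to $f_1$ (arrow $\alpha\mapsto\alpha^*$, path $p=a_m\cdots a_1\mapsto p^*=a_m^*\cdots a_1^*$, $e_i^*=f_i$, $e_1^*=e_n^*=f_1$), $I_B$ generated by $Z_B=\{r^*:r\in Z_A\}\cup\{b^*c^*: b,c\text{ arrows},\ t(c),s(b)\in\{e_1,e_n\},\ t(c)\ne s(b)\}$; $\mathcal B_B$ its basis paths. For path sets $X,Y$, $k(X\|Y)$ has basis the pairs $x\|y$ of parallel paths (same source and target). For monomial $\Lambda=kQ/\langle Z\rangle$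 with basis paths $\mathcal B$, $\delta^1:k(Q_1\|\mathcal B)\to k(Z\|\mathcal B)$, $a\|\gamma\mapsto\sum_{r\in Z}r\|r^{a\|\gamma}$, where $u^{a\|\gamma}$ is the sum over occurrences of $a$ in the path $u$ of the path obtained by replacing that occurrence by $\gamma$, keeping only paths in $\mathcal B$. $\mathrm{Ker}\,\delta^1$ is a Lie algebra under $[a\|\gamma,b\|\epsilon]=b\|\epsilon^{a\|\gamma}-a\|\gamma^{b\|\epsilon}$ (it corresponds to the Lie algebra of $E$-bimodule derivations of $kQ_1$ into $\Lambda$; when $\mathrm{char}(k)=p>0$ it is restricted with $p$-power map given by $p$-fold composition of derivations). $\delta^1_A,\delta^1_B$ are these for $A,B$. $\psi_1:k((Q_A)_1\|\mathcal B_A)\to k((Q_B)_1\|\mathcal B_B)$, $a\|p\mapsto a^*\|p^*$. *)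

theory Defs
  imports Main "HOL-Library.Sublist"
begin

record ('v, 'a) quiver =
  verts :: "'v set"
  arrs  :: "'a set"
  src   :: "'a \<Rightarrow> 'v"
  tgt   :: "'a \<Rightarrow> 'v"

text \<open>A path is a start vertex together with the list of its arrows in the order
  in which they are traversed: the path a_m ... a_1 is (s(a_1), [a_1, ..., a_m]);
  the trivial path e_v is (v, []).\<close>
type_synonym ('v, 'a) qpath = "'v \<times> 'a list"

definition is_path :: "('v, 'a) quiver \<Rightarrow> ('v, 'a) qpath \<Rightarrow> bool" where
  "is_path Q p \<longleftrightarrow> fst p \<in> verts Q \<and> set (snd p) \<subseteq> arrs Q
     \<and> (snd p \<noteq> [] \<longrightarrow> src Q (hd (snd p)) = fst p)
     \<and> (\<forall>i. Suc i < length (snd p) \<longrightarrow> tgt Q (snd p ! i) = src Q (snd p ! Suc i))"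

definition ptgt :: "('v, 'a) quiver \<Rightarrow> ('v, 'a) qpath \<Rightarrow> 'v" where
  "ptgt Q p = (if snd p = [] then fst p else tgt Q (last (snd p)))"

definition parallel :: "('v, 'a) quiver \<Rightarrow> ('v, 'a) qpath \<Rightarrow> ('v, 'a) qpath \<Rightarrow> bool" where
  "parallel Q p q \<longleftrightarrow> fst p = fst q \<and> ptgt Q p = ptgt Q q"

definition arrow_path :: "('v, 'a) quiver \<Rightarrow> 'a \<Rightarrow> ('v, 'a) qpath" where
  "arrow_path Q a = (src Q a, [a])"

text \<open>Basis paths of kQ/<Z>: paths having no element of Z as a (contiguous) subpath.\<close>
definition basis_paths :: "('v, 'a) quiver \<Rightarrow> ('v, 'a) qpath set \<Rightarrow> ('v, 'a) qpath set" where
  "basis_paths Q Z = {p. is_path Q p \<and> \<not> (\<exists>r\<in>Z. sublist (snd r) (snd p))}"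

text \<open>kQ/<Z> is a monomial algebra: finite quiver, Z a finite minimal set of paths of
  length at least 2, and the ideal admissible (finitely many basis paths).\<close>
definition monomial :: "('v, 'a) quiver \<Rightarrow> ('v, 'a) qpath set \<Rightarrow> bool" where
  "monomial Q Z \<longleftrightarrow> finite (verts Q) \<and> finite (arrs Q)
     \<and> (\<forall>a\<in>arrs Q. src Q a \<in> verts Q \<and> tgt Q a \<in> verts Q)
     \<and> finite Z \<and> (\<forall>r\<in>Z. is_path Q r \<and> 2 \<le> length (snd r))
     \<and> (\<forall>r\<in>Z. \<forall>r'\<in>Z. sublist (snd r') (snd r) \<longrightarrow> r' = r)
     \<and> finite (basis_paths Q Z)"

text \<open>Elements of k(Q_1 || B): finitely supported functions on pairs (a, gamma) with
  a an arrow, gamma a basis path parallel to a.\<close>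
definition cochains1 :: "('v, 'a) quiver \<Rightarrow> ('v, 'a) qpath set
    \<Rightarrow> ('a \<times> ('v, 'a) qpath \<Rightarrow> 'k::field) set" where
  "cochains1 Q Z = {f. finite {x. f x \<noteq> 0} \<and>
     (\<forall>a p. f (a, p) \<noteq> 0 \<longrightarrow> a \<in> arrs Q \<and> p \<in> basis_paths Q Z \<and> parallel Q (arrow_path Q a) p)}"

text \<open>Coefficient of the path q in u^{a||gamma}: number of occurrences of a in u whose
  replacement by gamma gives q, provided q is a basis path (otherwise 0).\<close>
definition repl_coeff :: "('v, 'a) quiver \<Rightarrow> ('v, 'a) qpath set \<Rightarrow> ('v, 'a) qpath \<Rightarrow> 'a
    \<Rightarrow> ('v, 'a) qpath \<Rightarrow> ('v, 'a) qpath \<Rightarrow> 'k::field" where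
  "repl_coeff Q Z u a \<gamma> q = (if q \<in> basis_paths Q Z then
     of_nat (card {i. i < length (snd u) \<and> snd u ! i = a \<and>
        (fst u, take i (snd u) @ snd \<gamma> @ drop (Suc i) (snd u)) = q}) else 0)"

text \<open>u^f for f = sum of f(a,gamma) a||gamma, as a linear combination of paths.\<close>
definition der_path :: "('v, 'a) quiver \<Rightarrow> ('v, 'a) qpath set
    \<Rightarrow> ('a \<times> ('v, 'a) qpath \<Rightarrow> 'k::field) \<Rightarrow> ('v, 'a) qpath \<Rightarrow> ('v, 'a) qpath \<Rightarrow> 'k" where
  "der_path Q Z f u = (\<lambda>q. \<Sum>x\<in>{x. f x \<noteq> 0}. f x * repl_coeff Q Z u (fst x) (snd x) q)"

definition der :: "('v, 'a) quiver \<Rightarrow> ('v, 'a) qpath set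
    \<Rightarrow> ('a \<times> ('v, 'a) qpath \<Rightarrow> 'k::field) \<Rightarrow> (('v, 'a) qpath \<Rightarrow> 'k) \<Rightarrow> ('v, 'a) qpath \<Rightarrow> 'k" where
  "der Q Z f c = (\<lambda>q. \<Sum>u\<in>{u. c u \<noteq> 0}. c u * der_path Q Z f u q)"

definition delta1 :: "('v, 'a) quiver \<Rightarrow> ('v, 'a) qpath set
    \<Rightarrow> ('a \<times> ('v, 'a) qpath \<Rightarrow> 'k::field) \<Rightarrow> (('v, 'a) qpath \<times> ('v, 'a) qpath \<Rightarrow> 'k)" where
  "delta1 Q Z f = (\<lambda>(r, q). if r \<in> Z then der_path Q Z f r q else 0)"

definition ker1 :: "('v, 'a) quiver \<Rightarrow> ('v, 'a) qpath set
    \<Rightarrow> ('a \<times> ('v, 'a) qpath \<Rightarrow> 'k::field) set" where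
  "ker1 Q Z = {f \<in> cochains1 Q Z. delta1 Q Z f = (\<lambda>_. 0)}"

text \<open>Lie bracket, bilinear extension of
  [a||gamma, b||eps] = b||eps^{a||gamma} - a||gamma^{b||eps}.\<close>
definition bracket :: "('v, 'a) quiver \<Rightarrow> ('v, 'a) qpath set
    \<Rightarrow> ('a \<times> ('v, 'a) qpath \<Rightarrow> 'k::field) \<Rightarrow> ('a \<times> ('v, 'a) qpath \<Rightarrow> 'k)
    \<Rightarrow> ('a \<times> ('v, 'a) qpath \<Rightarrow> 'k)" where
  "bracket Q Z f g = (\<lambda>(x, q). der Q Z f (\<lambda>e. g (x, e)) q - der Q Z g (\<lambda>e. f (x, e)) q)"

text \<open>p-power map: the p-fold composite of the derivation D_f, evaluated on arrows:
  f^[p](x) = D_f^p(x) = D_f^(p-1)(f(x)).\<close>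
definition ppow :: "('v, 'a) quiver \<Rightarrow> ('v, 'a) qpath set \<Rightarrow> nat
    \<Rightarrow> ('a \<times> ('v, 'a) qpath \<Rightarrow> 'k::field) \<Rightarrow> ('a \<times> ('v, 'a) qpath \<Rightarrow> 'k)" where
  "ppow Q Z p f = (\<lambda>(x, q). ((der Q Z f) ^^ (p - 1)) (\<lambda>e. f (x, e)) q)"

text \<open>Gluing the vertices u (= e_1) and w (= e_n) into u (= f_1).\<close>
definition gluev :: "'v \<Rightarrow> 'v \<Rightarrow> 'v \<Rightarrow> 'v" where
  "gluev u w v = (if v = w then u else v)"

definition glue_quiver :: "('v, 'a) quiver \<Rightarrow> 'v \<Rightarrow> 'v \<Rightarrow> ('v, 'a) quiver" where
  "glue_quiver Q u w = \<lparr>verts = gluev u w ` verts Q, arrs = arrs Q,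
     src = gluev u w \<circ> src Q, tgt = gluev u w \<circ> tgt Q\<rparr>"

definition glue_path :: "'v \<Rightarrow> 'v \<Rightarrow> ('v, 'a) qpath \<Rightarrow> ('v, 'a) qpath" where
  "glue_path u w p = (gluev u w (fst p), snd p)"

text \<open>Z_B = {r^*} union {b^* c^* : t(c), s(b) in {e_1,e_n}, t(c) /= s(b)}.\<close>
definition glue_rels :: "('v, 'a) quiver \<Rightarrow> ('v, 'a) qpath set \<Rightarrow> 'v \<Rightarrow> 'v \<Rightarrow> ('v, 'a) qpath set" where
  "glue_rels Q Z u w = glue_path u w ` Z \<union>
     {(gluev u w (src Q c), [c, b]) | b c. b \<in> arrs Q \<and> c \<in> arrs Q
        \<and> tgt Q c \<in> {u, w} \<and> src Q b \<in> {u, w} \<and> tgt Q c \<noteq> src Q b}"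

definition psi1 :: "'v \<Rightarrow> 'v \<Rightarrow> ('a \<times> ('v, 'a) qpath \<Rightarrow> 'k::field) \<Rightarrow> ('a \<times> ('v, 'a) qpath \<Rightarrow> 'k)" where
  "psi1 u w f = (\<lambda>(a, q). \<Sum>p\<in>{p. f (a, p) \<noteq> 0 \<and> glue_path u w p = q}. f (a, p))"

definition non_isolated :: "('v, 'a) quiver \<Rightarrow> 'v \<Rightarrow> bool" where
  "non_isolated Q v \<longleftrightarrow> (\<exists>a\<in>arrs Q. src Q a = v \<or> tgt Q a = v)"

end

theory Submission
  imports Defs
begin

text \<open>Gluing changes only the start vertex of a path, so psi_1 is the pushforward of a cochain
  along p \<mapsto> p^*, a map with finite fibres. A path of Q is a basis path of A exactly when p^*
  is a basis path of B, because the new relations b^* c^* are not composable in Q. Hence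
  replacing an arrow commutes with gluing, and the derivation of B induced by psi_1 f is the
  pushforward of the derivation induced by f. This gives compatibility with brackets and
  p-th powers and kills the relations r^*. A new relation b^* c^* is killed as well: replacing
  b or c by a nontrivial path creates another new relation, and replacing it by a trivial
  path needs a loop alpha at e_1 or e_n. For such a loop some alpha^m lies in Z_A by
  admissibility, the coefficient of alpha^(m-1) in delta^1 f is m f(alpha||e), and m is
  invertible in k, so cocycles vanish on alpha||e. Injectivity holds because a cochain is
  supported on pairs a||p with p starting at s(a), so p is recovered from p^*.\<close>

fun walk :: "('v, 'a) quiver \<Rightarrow> 'v \<Rightarrow> 'a list \<Rightarrow> bool" where
  "walk Q v [] = True"
| "walk Q v (a # l) \<longleftrightarrow> a \<in> arrs Q \<and> src Q a = v \<and> walk Q (tgt Q a) l"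

fun walk_end :: "('v, 'a) quiver \<Rightarrow> 'v \<Rightarrow> 'a list \<Rightarrow> 'v" where
  "walk_end Q v [] = v"
| "walk_end Q v (a # l) = walk_end Q (tgt Q a) l"

lemma walk_iff: "walk Q v l \<longleftrightarrow> set l \<subseteq> arrs Q \<and> (l \<noteq> [] \<longrightarrow> src Q (hd l) = v)
     \<and> (\<forall>i. Suc i < length l \<longrightarrow> tgt Q (l ! i) = src Q (l ! Suc i))"
proof (induction l arbitrary: v)
  case (Cons a l)
  have "(\<forall>i. Suc i < length (a # l) \<longrightarrow> tgt Q ((a # l) ! i) = src Q ((a # l) ! Suc i))
     \<longleftrightarrow> (l \<noteq> [] \<longrightarrow> tgt Q a = src Q (hd l)) \<and> (\<forall>i. Suc i < length l \<longrightarrow> tgt Q (l ! i) = src Q (l ! Suc i))"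
    by (cases l) (auto simp: nth_Cons split: nat.split)
  then show ?case using Cons.IH by auto
qed simp

lemma is_path_iff_walk: "is_path Q p \<longleftrightarrow> fst p \<in> verts Q \<and> walk Q (fst p) (snd p)"
  by (auto simp: is_path_def walk_iff)

lemma walk_end_eq: "walk_end Q v l = (if l = [] then v else tgt Q (last l))"
  by (induction l arbitrary: v) auto

lemma ptgt_eq_walk_end: "ptgt Q p = walk_end Q (fst p) (snd p)"
  by (simp add: ptgt_def walk_end_eq)

lemma walk_append: "walk Q v (xs @ ys) \<longleftrightarrow> walk Q v xs \<and> walk Q (walk_end Q v xs) ys"
  by (induction xs arbitrary: v) auto

lemma walk_replicate: "\<alpha> \<in> arrs Q \<Longrightarrow> src Q \<alpha> = v \<Longrightarrow> tgt Q \<alpha> = v \<Longrightarrow> walk Q v (replicate n \<alpha>)"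
  by (induction n) auto

lemma walk_sublist_consecutive: "walk Q v l \<Longrightarrow> sublist [c, b] l \<Longrightarrow> tgt Q c = src Q b"
  by (auto simp: sublist_def walk_append)

lemma walk_glue_quiver: "walk Q v l \<Longrightarrow> walk (glue_quiver Q u w) (gluev u w v) l"
  by (induction l arbitrary: v) (auto simp: glue_quiver_def)

lemma is_path_glue_path: "is_path Q p \<Longrightarrow> is_path (glue_quiver Q u w) (glue_path u w p)"
  using walk_glue_quiver[of Q "fst p" "snd p" u w]
  by (auto simp: is_path_iff_walk glue_path_def glue_quiver_def)

lemma ptgt_glue_path: "ptgt (glue_quiver Q u w) (glue_path u w p) = gluev u w (ptgt Q p)"
  by (simp add: ptgt_def glue_quiver_def glue_path_def)

lemma parallel_arrow_path_iff:
  "parallel Q (arrow_path Q a) \<gamma> \<longleftrightarrow> fst \<gamma> = src Q a \<and> ptgt Q \<gamma> = tgt Q a"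
  by (auto simp: parallel_def arrow_path_def ptgt_def)

lemma is_path_replace:
  assumes p: "is_path Q p" and i: "i < length (snd p)" "snd p ! i = a"
    and \<gamma>: "is_path Q \<gamma>" "fst \<gamma> = src Q a" "ptgt Q \<gamma> = tgt Q a"
  shows "is_path Q (fst p, take i (snd p) @ snd \<gamma> @ drop (Suc i) (snd p))"
proof -
  have "snd p = take i (snd p) @ a # drop (Suc i) (snd p)"
    using id_take_nth_drop[OF i(1)] i(2) by simp
  then have "walk Q (fst p) (take i (snd p))"
    and "walk Q (walk_end Q (fst p) (take i (snd p))) (a # drop (Suc i) (snd p))"
    using p walk_append[of Q "fst p" "take i (snd p)" "a # drop (Suc i) (snd p)"]
    by (auto simp: is_path_iff_walk)
  moreover have "walk Q (src Q a) (snd \<gamma>)" "walk_end Q (src Q a) (snd \<gamma>) = tgt Q a"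
    using \<gamma> by (auto simp: is_path_iff_walk ptgt_eq_walk_end)
  ultimately show ?thesis using p by (auto simp: is_path_iff_walk walk_append)
qed

lemma glue_path_in_basis_iff:
  assumes p: "is_path Q p"
  shows "glue_path u w p \<in> basis_paths (glue_quiver Q u w) (glue_rels Q Z u w) \<longleftrightarrow> p \<in> basis_paths Q Z"
proof -
  have no_new_rel: "\<not> sublist [c, b] (snd p)" if "tgt Q c \<noteq> src Q b" for b c
    using p walk_sublist_consecutive[of Q "fst p" "snd p" c b] that by (auto simp: is_path_iff_walk)
  have "(\<exists>r\<in>glue_rels Q Z u w. sublist (snd r) (snd p)) \<longleftrightarrow> (\<exists>r\<in>Z. sublist (snd r) (snd p))"
  proof
    assume "\<exists>r\<in>glue_rels Q Z u w. sublist (snd r) (snd p)"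
    then obtain r where r: "r \<in> glue_rels Q Z u w" "sublist (snd r) (snd p)" by blast
    show "\<exists>r\<in>Z. sublist (snd r) (snd p)"
    proof (cases "r \<in> glue_path u w ` Z")
      case True
      then obtain r0 where "r0 \<in> Z" "r = glue_path u w r0" by blast
      then show ?thesis using r(2) by (auto simp: glue_path_def)
    next
      case False
      then show ?thesis using r by (auto simp: glue_rels_def dest: no_new_rel)
    qed
  next
    assume "\<exists>r\<in>Z. sublist (snd r) (snd p)"
    then obtain r where "r \<in> Z" "sublist (snd r) (snd p)" by blast
    then show "\<exists>r\<in>glue_rels Q Z u w. sublist (snd r) (snd p)"
      by (intro bexI[of _ "glue_path u w r"]) (auto simp: glue_rels_def glue_path_def)
  qed
  then show ?thesis using p is_path_glue_path[OF p]
    by (auto simp: basis_paths_def glue_path_def)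
qed

lemma finite_glue_path_fibre: "finite {p. glue_path u w p = q}"
proof (rule finite_subset)
  show "{p. glue_path u w p = q} \<subseteq> {(u, snd q), (w, snd q), q}"
    by (auto simp: glue_path_def gluev_def)
qed simp

definition pushforward :: "('x \<Rightarrow> 'y) \<Rightarrow> ('x \<Rightarrow> 'k::comm_monoid_add) \<Rightarrow> 'y \<Rightarrow> 'k" where
  "pushforward h c y = (\<Sum>x | c x \<noteq> 0 \<and> h x = y. c x)"

lemma pushforward_nonzeroD: "pushforward h c y \<noteq> 0 \<Longrightarrow> \<exists>x. c x \<noteq> 0 \<and> h x = y"
  using sum.neutral[of "{x. c x \<noteq> 0 \<and> h x = y}" c] unfolding pushforward_def by auto

lemma pushforward_eq_sum_fibre:
  "finite {x. h x = y} \<Longrightarrow> pushforward h c y = (\<Sum>x | h x = y. c x)"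
  unfolding pushforward_def by (rule sum.mono_neutral_left) auto

lemma finite_support_pushforward:
  assumes "finite {x. c x \<noteq> 0}"
  shows "finite {y. pushforward h c y \<noteq> 0}"
proof (rule finite_subset)
  show "{y. pushforward h c y \<noteq> 0} \<subseteq> h ` {x. c x \<noteq> 0}"
    by (auto dest: pushforward_nonzeroD)
qed (use assms in simp)

lemma sum_pushforward:
  fixes c :: "'x \<Rightarrow> 'k::semiring_0"
  assumes fin: "finite {x. c x \<noteq> 0}"
  shows "(\<Sum>y | pushforward h c y \<noteq> 0. pushforward h c y * k y) = (\<Sum>x | c x \<noteq> 0. c x * k (h x))"
proof -
  let ?S = "{x. c x \<noteq> 0}"
  have "(\<Sum>y | pushforward h c y \<noteq> 0. pushforward h c y * k y) = (\<Sum>y\<in>h ` ?S. pushforward h c y * k y)"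
    by (rule sum.mono_neutral_left) (use fin in \<open>auto dest: pushforward_nonzeroD\<close>)
  also have "\<dots> = (\<Sum>y\<in>h ` ?S. \<Sum>x | x \<in> ?S \<and> h x = y. c x * k (h x))"
    by (rule sum.cong) (auto simp: pushforward_def sum_distrib_right)
  also have "\<dots> = (\<Sum>x\<in>?S. c x * k (h x))"
    using sum.image_gen[OF fin, of "\<lambda>x. c x * k (h x)" h] by simp
  finally show ?thesis .
qed

lemma psi1_eq_pushforward: "psi1 u w f = pushforward (\<lambda>(a, p). (a, glue_path u w p)) f"
proof (intro ext, clarify)
  fix a q
  have "{x. f x \<noteq> 0 \<and> (case x of (a, p) \<Rightarrow> (a, glue_path u w p)) = (a, q)}
      = Pair a ` {p. f (a, p) \<noteq> 0 \<and> glue_path u w p = q}"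
    by auto
  then show "psi1 u w f (a, q) = pushforward (\<lambda>(a, p). (a, glue_path u w p)) f (a, q)"
    unfolding psi1_def pushforward_def by (simp add: sum.reindex inj_on_def)
qed

lemma psi1_slice: "psi1 u w f (a, q) = pushforward (glue_path u w) (\<lambda>p. f (a, p)) q"
  by (simp add: psi1_def pushforward_def)

lemma psi1_eq_sum_fibre: "psi1 u w f (a, q) = (\<Sum>p | glue_path u w p = q. f (a, p))"
  by (simp add: psi1_slice pushforward_eq_sum_fibre finite_glue_path_fibre)

lemma psi1_add: "psi1 u w (\<lambda>x. f x + g x) = (\<lambda>x. psi1 u w f x + psi1 u w g x)"
  by (auto simp: psi1_eq_sum_fibre sum.distrib)

lemma psi1_scale: "psi1 u w (\<lambda>x. c * f x) = (\<lambda>x. c * psi1 u w f x)"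
  by (auto simp: psi1_eq_sum_fibre sum_distrib_left)

lemma cochains1D:
  assumes "f \<in> cochains1 Q Z" "f (a, p) \<noteq> 0"
  shows "a \<in> arrs Q" "p \<in> basis_paths Q Z" "is_path Q p" "fst p = src Q a" "ptgt Q p = tgt Q a"
proof -
  have "a \<in> arrs Q \<and> p \<in> basis_paths Q Z \<and> parallel Q (arrow_path Q a) p"
    using assms unfolding cochains1_def by blast
  then show "a \<in> arrs Q" "p \<in> basis_paths Q Z" "is_path Q p" "fst p = src Q a" "ptgt Q p = tgt Q a"
    by (simp_all add: basis_paths_def parallel_arrow_path_iff)
qed

lemma finite_cochain_slice:
  assumes "f \<in> cochains1 Q Z"
  shows "finite {p. f (a, p) \<noteq> 0}"
proof -
  have "finite (Pair a -` {x. f x \<noteq> 0})"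
    using assms by (intro finite_vimageI) (auto simp: cochains1_def inj_on_def)
  then show ?thesis by (simp add: vimage_def)
qed

lemma repl_coeff_in_glue_fibre:
  assumes p: "is_path Q p" and \<gamma>: "is_path Q \<gamma>" "fst \<gamma> = src Q a" "ptgt Q \<gamma> = tgt Q a"
    and p': "glue_path u w p' = q"
  shows "repl_coeff Q Z p a \<gamma> p' = (if q \<in> basis_paths (glue_quiver Q u w) (glue_rels Q Z u w)
     then of_nat (card {i. i < length (snd p) \<and> snd p ! i = a
       \<and> (fst p, take i (snd p) @ snd \<gamma> @ drop (Suc i) (snd p)) = p'}) else (0::'k::field))"
proof (cases "\<exists>i < length (snd p). snd p ! i = a \<and> (fst p, take i (snd p) @ snd \<gamma> @ drop (Suc i) (snd p)) = p'")
  case True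
  then have "is_path Q p'"
    using is_path_replace[OF p _ _ \<gamma>] by blast
  then have "q \<in> basis_paths (glue_quiver Q u w) (glue_rels Q Z u w) \<longleftrightarrow> p' \<in> basis_paths Q Z"
    using glue_path_in_basis_iff[of Q p' u w Z] p' by simp
  then show ?thesis by (simp add: repl_coeff_def)
next
  case False
  then have no_occurrence: "{i. i < length (snd p) \<and> snd p ! i = a
      \<and> (fst p, take i (snd p) @ snd \<gamma> @ drop (Suc i) (snd p)) = p'} = {}"
    by blast
  show ?thesis unfolding repl_coeff_def no_occurrence by simp
qed

text \<open>Replacing an arrow and then gluing gives the same paths as gluing and then replacing;
  the only point is that basis paths of the two algebras correspond.\<close>
lemma repl_coeff_glue_path:
  assumes p: "is_path Q p" and \<gamma>: "is_path Q \<gamma>" "fst \<gamma> = src Q a" "ptgt Q \<gamma> = tgt Q a"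
  shows "(repl_coeff (glue_quiver Q u w) (glue_rels Q Z u w) (glue_path u w p) a (glue_path u w \<gamma>) q :: 'k::field)
     = (\<Sum>p' | glue_path u w p' = q. repl_coeff Q Z p a \<gamma> p')"
proof -
  define I where "I = {i. i < length (snd p) \<and> snd p ! i = a}"
  define r where "r i = (fst p, take i (snd p) @ snd \<gamma> @ drop (Suc i) (snd p))" for i
  let ?BB = "basis_paths (glue_quiver Q u w) (glue_rels Q Z u w)"
  let ?fibre = "{p'. glue_path u w p' = q}"
  have "{i\<in>I. glue_path u w (r i) = q} = (\<Union>p'\<in>?fibre. {i\<in>I. r i = p'})"
    by auto
  moreover have "finite I" by (simp add: I_def)
  ultimately have card: "card {i\<in>I. glue_path u w (r i) = q} = (\<Sum>p'\<in>?fibre. card {i\<in>I. r i = p'})"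
    by (simp only:) (rule card_UN_disjoint, auto simp: finite_glue_path_fibre)
  have "(repl_coeff (glue_quiver Q u w) (glue_rels Q Z u w) (glue_path u w p) a (glue_path u w \<gamma>) q :: 'k)
      = (if q \<in> ?BB then of_nat (card {i\<in>I. glue_path u w (r i) = q}) else 0)"
    by (simp add: repl_coeff_def I_def r_def glue_path_def conj_assoc)
  also have "\<dots> = (\<Sum>p'\<in>?fibre. if q \<in> ?BB then of_nat (card {i\<in>I. r i = p'}) else 0)"
    unfolding card by (simp add: of_nat_sum)
  also have "\<dots> = (\<Sum>p'\<in>?fibre. repl_coeff Q Z p a \<gamma> p')"
  proof (rule sum.cong[OF refl])
    fix p' assume "p' \<in> ?fibre"
    then have p': "glue_path u w p' = q" by simp
    show "(if q \<in> ?BB then of_nat (card {i\<in>I. r i = p'}) else 0) = repl_coeff Q Z p a \<gamma> p'"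
      by (simp add: repl_coeff_in_glue_fibre[OF p \<gamma> p'] I_def r_def conj_assoc)
  qed
  finally show ?thesis .
qed

lemma der_path_glue_path:
  assumes f: "f \<in> cochains1 Q Z" and p: "is_path Q p"
  shows "der_path (glue_quiver Q u w) (glue_rels Q Z u w) (psi1 u w f) (glue_path u w p) q
       = (\<Sum>p' | glue_path u w p' = q. der_path Q Z f p p')"
proof -
  let ?RB = "repl_coeff (glue_quiver Q u w) (glue_rels Q Z u w) (glue_path u w p)"
  let ?T = "{x. f x \<noteq> 0}"
  let ?fibre = "{p'. glue_path u w p' = q}"
  have "der_path (glue_quiver Q u w) (glue_rels Q Z u w) (psi1 u w f) (glue_path u w p) q
     = (\<Sum>x\<in>?T. f x * ?RB (fst x) (glue_path u w (snd x)) q)"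
    using sum_pushforward[of f "\<lambda>(a, p). (a, glue_path u w p)" "\<lambda>y. ?RB (fst y) (snd y) q"] f
    by (simp add: der_path_def psi1_eq_pushforward cochains1_def case_prod_beta)
  also have "\<dots> = (\<Sum>x\<in>?T. \<Sum>p'\<in>?fibre. f x * repl_coeff Q Z p (fst x) (snd x) p')"
  proof (rule sum.cong[OF refl])
    fix x assume "x \<in> ?T"
    then obtain a \<gamma> where x: "x = (a, \<gamma>)" and nz: "f (a, \<gamma>) \<noteq> 0" by (cases x) auto
    show "f x * ?RB (fst x) (glue_path u w (snd x)) q
        = (\<Sum>p'\<in>?fibre. f x * repl_coeff Q Z p (fst x) (snd x) p')"
      unfolding x fst_conv snd_conv repl_coeff_glue_path[OF p cochains1D(3-5)[OF f nz]]
      by (rule sum_distrib_left)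
  qed
  also have "\<dots> = (\<Sum>p'\<in>?fibre. der_path Q Z f p p')"
    by (subst sum.swap) (simp add: der_path_def)
  finally show ?thesis .
qed

lemma der_glue_pushforward:
  fixes Q :: "('v, 'a) quiver" and f :: "'a \<times> ('v, 'a) qpath \<Rightarrow> 'k::field"
  assumes f: "f \<in> cochains1 Q Z"
    and c: "finite {p. c p \<noteq> 0}" "\<And>p. c p \<noteq> 0 \<Longrightarrow> is_path Q p"
  shows "der (glue_quiver Q u w) (glue_rels Q Z u w) (psi1 u w f) (pushforward (glue_path u w) c)
       = pushforward (glue_path u w) (der Q Z f c)"
proof
  fix q :: "('v, 'a) qpath"
  let ?fibre = "{p'. glue_path u w p' = q}"
  have "der (glue_quiver Q u w) (glue_rels Q Z u w) (psi1 u w f) (pushforward (glue_path u w) c) q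
     = (\<Sum>p | c p \<noteq> 0. c p * der_path (glue_quiver Q u w) (glue_rels Q Z u w) (psi1 u w f) (glue_path u w p) q)"
    unfolding der_def by (rule sum_pushforward[OF c(1)])
  also have "\<dots> = (\<Sum>p | c p \<noteq> 0. \<Sum>p'\<in>?fibre. c p * der_path Q Z f p p')"
    by (rule sum.cong) (simp_all add: der_path_glue_path[OF f c(2)] sum_distrib_left)
  also have "\<dots> = (\<Sum>p'\<in>?fibre. der Q Z f c p')"
    by (subst sum.swap) (simp add: der_def)
  also have "\<dots> = pushforward (glue_path u w) (der Q Z f c) q"
    by (simp add: pushforward_eq_sum_fibre finite_glue_path_fibre)
  finally show "der (glue_quiver Q u w) (glue_rels Q Z u w) (psi1 u w f) (pushforward (glue_path u w) c) q
       = pushforward (glue_path u w) (der Q Z f c) q" .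
qed

lemma der_nonzeroD: "der Q Z f c q \<noteq> 0 \<Longrightarrow> q \<in> basis_paths Q Z"
  by (rule ccontr) (simp add: der_def der_path_def repl_coeff_def)

lemma funpow_der_glue_pushforward:
  assumes mono: "monomial Q Z" and f: "f \<in> cochains1 Q Z"
    and c: "finite {p. c p \<noteq> 0}" "\<And>p. c p \<noteq> 0 \<Longrightarrow> is_path Q p"
  shows "(der (glue_quiver Q u w) (glue_rels Q Z u w) (psi1 u w f) ^^ n) (pushforward (glue_path u w) c)
       = pushforward (glue_path u w) ((der Q Z f ^^ n) c)"
  using c
proof (induction n arbitrary: c)
  case (Suc n)
  let ?DB = "der (glue_quiver Q u w) (glue_rels Q Z u w) (psi1 u w f)"
  have "finite (basis_paths Q Z)" using mono by (simp add: monomial_def)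
  then have "finite {p. der Q Z f c p \<noteq> 0}"
    by (rule finite_subset[rotated]) (auto dest: der_nonzeroD)
  moreover have "is_path Q p" if "der Q Z f c p \<noteq> 0" for p
    using der_nonzeroD[OF that] by (simp add: basis_paths_def)
  ultimately have IH: "(?DB ^^ n) (pushforward (glue_path u w) (der Q Z f c))
      = pushforward (glue_path u w) ((der Q Z f ^^ n) (der Q Z f c))"
    by (rule Suc.IH)
  have "(?DB ^^ Suc n) (pushforward (glue_path u w) c) = (?DB ^^ n) (?DB (pushforward (glue_path u w) c))"
    by (simp only: funpow_Suc_right comp_def)
  also have "?DB (pushforward (glue_path u w) c) = pushforward (glue_path u w) (der Q Z f c)"
    by (rule der_glue_pushforward[OF f Suc.prems])
  also note IH
  also have "(der Q Z f ^^ n) (der Q Z f c) = (der Q Z f ^^ Suc n) c"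
    by (simp only: funpow_Suc_right comp_def)
  finally show ?case .
qed simp

lemma ker1_der_path_rel_eq_0: "f \<in> ker1 Q Z \<Longrightarrow> r \<in> Z \<Longrightarrow> der_path Q Z f r q = 0"
  unfolding ker1_def delta1_def by (auto dest!: fun_cong[of _ _ "(r, q)"])

text \<open>By admissibility not every power of a loop is a basis path.\<close>
lemma loop_power_in_rels:
  assumes mono: "monomial Q Z" and \<alpha>: "\<alpha> \<in> arrs Q" "src Q \<alpha> = tgt Q \<alpha>"
  obtains m where "2 \<le> m" "(src Q \<alpha>, replicate m \<alpha>) \<in> Z"
proof -
  let ?v = "src Q \<alpha>"
  have "?v \<in> verts Q" using mono \<alpha> by (simp add: monomial_def)
  then have path: "is_path Q (?v, replicate n \<alpha>)" for n
    using walk_replicate[OF \<alpha>(1) refl \<alpha>(2)[symmetric]] by (simp add: is_path_iff_walk)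
  have "\<not> range (\<lambda>n. (?v, replicate n \<alpha>)) \<subseteq> basis_paths Q Z"
  proof
    assume "range (\<lambda>n. (?v, replicate n \<alpha>)) \<subseteq> basis_paths Q Z"
    moreover have "finite (basis_paths Q Z)" using mono by (simp add: monomial_def)
    moreover have "inj (\<lambda>n. (?v, replicate n \<alpha>))" by (rule injI) simp
    ultimately show False using finite_subset finite_imageD by blast
  qed
  then obtain n r where r: "r \<in> Z" "sublist (snd r) (replicate n \<alpha>)"
    using path by (auto simp: basis_paths_def)
  define m where "m = length (snd r)"
  have "is_path Q r" "2 \<le> m" using mono r(1) by (auto simp: monomial_def m_def)
  moreover have rel: "snd r = replicate m \<alpha>"
    unfolding m_def using set_mono_sublist[OF r(2)]
    by (intro replicate_length_same[symmetric]) (auto simp: set_replicate_conv_if split: if_splits)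
  ultimately have "fst r = ?v" by (cases m) (auto simp: is_path_def)
  with r(1) rel \<open>2 \<le> m\<close> show thesis by (metis that prod.collapse)
qed

lemma loop_power_pred_in_basis:
  assumes mono: "monomial Q Z" and \<alpha>: "\<alpha> \<in> arrs Q" "src Q \<alpha> = tgt Q \<alpha>"
    and rel: "(src Q \<alpha>, replicate m \<alpha>) \<in> Z"
  shows "(src Q \<alpha>, replicate (m - 1) \<alpha>) \<in> basis_paths Q Z"
proof -
  let ?v = "src Q \<alpha>"
  have "?v \<in> verts Q" "2 \<le> m" using mono \<alpha> rel by (auto simp: monomial_def)
  have "\<not> sublist (snd r) (replicate (m - 1) \<alpha>)" if r: "r \<in> Z" for r
  proof
    assume sub: "sublist (snd r) (replicate (m - 1) \<alpha>)"
    have "replicate m \<alpha> = replicate (m - 1) \<alpha> @ [\<alpha>]"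
      using \<open>2 \<le> m\<close> by (cases m) (simp_all add: replicate_append_same)
    then have "sublist (snd r) (replicate m \<alpha>)"
      using sub by (metis sublist_append_rightI sublist_order.order_trans)
    then have "r = (?v, replicate m \<alpha>)" using mono r rel by (auto simp: monomial_def)
    then show False using sublist_length_le[OF sub] \<open>2 \<le> m\<close> by simp
  qed
  moreover have "is_path Q (?v, replicate (m - 1) \<alpha>)"
    using \<open>?v \<in> verts Q\<close> walk_replicate[OF \<alpha>(1) refl \<alpha>(2)[symmetric]] by (simp add: is_path_iff_walk)
  ultimately show ?thesis by (auto simp: basis_paths_def)
qed

lemma repl_coeff_loop_power:
  assumes "0 < m" and basis: "(v, replicate (m - 1) \<alpha>) \<in> basis_paths Q Z"
  shows "repl_coeff Q Z (v, replicate m \<alpha>) a \<gamma> (v, replicate (m - 1) \<alpha>)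
       = (if a = \<alpha> \<and> snd \<gamma> = [] then of_nat m else 0)"
proof -
  define E where "E = {i. i < m \<and> replicate m \<alpha> ! i = a
     \<and> take i (replicate m \<alpha>) @ snd \<gamma> @ drop (Suc i) (replicate m \<alpha>) = replicate (m - 1) \<alpha>}"
  have "E = (if a = \<alpha> \<and> snd \<gamma> = [] then {..<m} else {})"
  proof (cases "a = \<alpha> \<and> snd \<gamma> = []")
    case True
    then show ?thesis by (auto simp: E_def min_def replicate_add[symmetric])
  next
    case False
    have "a = \<alpha> \<and> snd \<gamma> = []" if "i \<in> E" for i
    proof -
      from that have i: "i < m" "a = \<alpha>"
        and eq: "take i (replicate m \<alpha>) @ snd \<gamma> @ drop (Suc i) (replicate m \<alpha>) = replicate (m - 1) \<alpha>"
        by (auto simp: E_def)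
      from arg_cong[OF eq, of length] i show ?thesis by (cases m) simp_all
    qed
    with False show ?thesis by auto
  qed
  then show ?thesis using basis by (simp add: repl_coeff_def E_def)
qed

lemma der_path_loop_power:
  assumes f: "f \<in> cochains1 Q Z" and "0 < m"
    and basis: "(src Q \<alpha>, replicate (m - 1) \<alpha>) \<in> basis_paths Q Z"
  shows "der_path Q Z f (src Q \<alpha>, replicate m \<alpha>) (src Q \<alpha>, replicate (m - 1) \<alpha>)
       = of_nat m * f (\<alpha>, (src Q \<alpha>, []))"
proof -
  let ?x = "(\<alpha>, (src Q \<alpha>, []))"
  have "der_path Q Z f (src Q \<alpha>, replicate m \<alpha>) (src Q \<alpha>, replicate (m - 1) \<alpha>)
      = (\<Sum>x | f x \<noteq> 0. if x = ?x then f x * of_nat m else 0)"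
    unfolding der_path_def
  proof (rule sum.cong[OF refl])
    fix x assume "x \<in> {x. f x \<noteq> 0}"
    then obtain a \<gamma> where x: "x = (a, \<gamma>)" and nz: "f (a, \<gamma>) \<noteq> 0" by (cases x) auto
    have "a = \<alpha> \<and> snd \<gamma> = [] \<longleftrightarrow> x = ?x"
      using cochains1D(4)[OF f nz] x by (cases \<gamma>) auto
    then have coeff: "repl_coeff Q Z (src Q \<alpha>, replicate m \<alpha>) (fst x) (snd x) (src Q \<alpha>, replicate (m - 1) \<alpha>)
        = (if x = ?x then of_nat m else 0)"
      using repl_coeff_loop_power[OF \<open>0 < m\<close> basis, of a \<gamma>] x by simp
    show "f x * repl_coeff Q Z (src Q \<alpha>, replicate m \<alpha>) (fst x) (snd x) (src Q \<alpha>, replicate (m - 1) \<alpha>)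
        = (if x = ?x then f x * of_nat m else 0)"
      unfolding coeff by simp
  qed
  also have "\<dots> = of_nat m * f ?x"
    using f by (simp add: cochains1_def)
  finally show ?thesis .
qed

lemma ker1_loop_vanishes:
  fixes f :: "'a \<times> ('v, 'a) qpath \<Rightarrow> 'k::field"
  assumes mono: "monomial Q Z" and f: "f \<in> ker1 Q Z" and \<alpha>: "\<alpha> \<in> arrs Q" "src Q \<alpha> = tgt Q \<alpha>"
    and char: "\<And>m. 2 \<le> m \<Longrightarrow> (src Q \<alpha>, replicate m \<alpha>) \<in> Z \<Longrightarrow> \<not> CHAR('k) dvd m"
  shows "f (\<alpha>, (src Q \<alpha>, [])) = 0"
proof -
  obtain m where m: "2 \<le> m" "(src Q \<alpha>, replicate m \<alpha>) \<in> Z"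
    using loop_power_in_rels[OF mono \<alpha>] .
  have "f \<in> cochains1 Q Z" using f by (simp add: ker1_def)
  then have "der_path Q Z f (src Q \<alpha>, replicate m \<alpha>) (src Q \<alpha>, replicate (m - 1) \<alpha>)
      = of_nat m * f (\<alpha>, (src Q \<alpha>, []))"
    using m(1) by (intro der_path_loop_power loop_power_pred_in_basis[OF mono \<alpha> m(2)]) simp_all
  then have "of_nat m * f (\<alpha>, (src Q \<alpha>, [])) = 0"
    using ker1_der_path_rel_eq_0[OF f m(2)] by simp
  moreover have "of_nat m \<noteq> (0::'k)" using char m by (simp add: of_nat_eq_0_iff_char_dvd)
  ultimately show ?thesis by simp
qed

lemma append_not_in_glue_basis:
  assumes l1: "walk Q v1 l1" "l1 \<noteq> []" "walk_end Q v1 l1 \<in> {u, w}"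
    and l2: "walk Q v2 l2" "l2 \<noteq> []" "v2 \<in> {u, w}"
    and ne: "walk_end Q v1 l1 \<noteq> v2"
  shows "(v, l1 @ l2) \<notin> basis_paths (glue_quiver Q u w) (glue_rels Q Z u w)"
proof -
  let ?c = "last l1" and ?b = "hd l2"
  have "?c \<in> arrs Q" "tgt Q ?c = walk_end Q v1 l1"
    using l1 by (auto simp: walk_iff walk_end_eq)
  moreover have "?b \<in> arrs Q" "src Q ?b = v2"
    using l2(1,2) by (cases l2; simp)+
  ultimately have "(gluev u w (src Q ?c), [?c, ?b]) \<in> glue_rels Q Z u w"
    using l1(3) l2(3) ne unfolding glue_rels_def by (intro UnI2 CollectI exI[of _ ?b] exI[of _ ?c]) simp
  moreover have "sublist [?c, ?b] (l1 @ l2)"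
  proof -
    have "l1 @ l2 = butlast l1 @ [?c, ?b] @ tl l2"
      using l1(2) l2(2) by simp
    then show ?thesis by (metis sublist_appendI)
  qed
  ultimately show ?thesis by (force simp: basis_paths_def)
qed

lemma replace_in_new_rel_not_in_glue_basis:
  assumes l: "walk Q (src Q a) l" "walk_end Q (src Q a) l = tgt Q a" "l \<noteq> []"
    and bc: "b \<in> arrs Q" "c \<in> arrs Q" "tgt Q c \<in> {u, w}" "src Q b \<in> {u, w}" "tgt Q c \<noteq> src Q b"
    and i: "i < 2" "[c, b] ! i = a"
  shows "(v, take i [c, b] @ l @ drop (Suc i) [c, b]) \<notin> basis_paths (glue_quiver Q u w) (glue_rels Q Z u w)"
proof -
  consider "i = 0" "a = c" | "i = 1" "a = b" using i by (auto simp: less_2_cases_iff)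
  then show ?thesis
  proof cases
    case 1
    have "(v, l @ [b]) \<notin> basis_paths (glue_quiver Q u w) (glue_rels Q Z u w)"
      using l bc 1 by (intro append_not_in_glue_basis[of Q "src Q c" l u w "src Q b" "[b]"]) auto
    with 1 show ?thesis by simp
  next
    case 2
    have "(v, [c] @ l) \<notin> basis_paths (glue_quiver Q u w) (glue_rels Q Z u w)"
      using l bc 2 by (intro append_not_in_glue_basis[of Q "src Q c" "[c]" u w "src Q b" l]) auto
    with 2 show ?thesis by simp
  qed
qed

text \<open>Replacing c or b in a new relation c b by a trivial path would need a loop at a glued
  vertex; replacing it by a nontrivial path creates a new relation again.\<close>
lemma repl_coeff_new_rel_eq_0:
  fixes f :: "'a \<times> ('v, 'a) qpath \<Rightarrow> 'k::field"
  assumes f: "f \<in> cochains1 Q Z" and nz: "f (a, \<gamma>) \<noteq> 0"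
    and loops: "\<forall>c\<in>arrs Q. src Q c = tgt Q c \<and> src Q c \<in> {u, w} \<longrightarrow> f (c, (src Q c, [])) = 0"
    and bc: "b \<in> arrs Q" "c \<in> arrs Q" "tgt Q c \<in> {u, w}" "src Q b \<in> {u, w}" "tgt Q c \<noteq> src Q b"
  shows "repl_coeff (glue_quiver Q u w) (glue_rels Q Z u w) (gluev u w (src Q c), [c, b]) a
           (glue_path u w \<gamma>) q = (0::'k)"
proof -
  let ?BB = "basis_paths (glue_quiver Q u w) (glue_rels Q Z u w)"
  let ?I = "{i. i < length [c, b] \<and> [c, b] ! i = a
      \<and> (gluev u w (src Q c), take i [c, b] @ snd (glue_path u w \<gamma>) @ drop (Suc i) [c, b]) = q}"
  have \<gamma>: "walk Q (src Q a) (snd \<gamma>)" "walk_end Q (src Q a) (snd \<gamma>) = tgt Q a"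
    using cochains1D(3-5)[OF f nz] by (auto simp: is_path_iff_walk ptgt_eq_walk_end)
  have nontrivial: "snd \<gamma> \<noteq> []" if "a \<in> {b, c}"
  proof
    assume "snd \<gamma> = []"
    then have "src Q a = tgt Q a" "\<gamma> = (src Q a, [])"
      using \<gamma>(2) cochains1D(4)[OF f nz] by (auto simp: prod_eq_iff)
    then show False using loops nz that bc by auto
  qed
  have no_indices: "?I = {}" if "q \<in> ?BB"
  proof (rule equals0I)
    fix i assume "i \<in> ?I"
    then have i: "i < 2" "[c, b] ! i = a"
      and "q = (gluev u w (src Q c), take i [c, b] @ snd \<gamma> @ drop (Suc i) [c, b])"
      by (auto simp: glue_path_def)
    moreover have "a \<in> {b, c}" using i by (auto simp: less_2_cases_iff)
    ultimately show False
      using replace_in_new_rel_not_in_glue_basis[OF \<gamma> nontrivial bc i] that by simp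
  qed
  show ?thesis
  proof (cases "q \<in> ?BB")
    case True
    show ?thesis unfolding repl_coeff_def fst_conv snd_conv no_indices[OF True] by simp
  qed (simp add: repl_coeff_def)
qed

lemma der_path_new_rel_eq_0:
  assumes f: "f \<in> cochains1 Q Z"
    and loops: "\<forall>c\<in>arrs Q. src Q c = tgt Q c \<and> src Q c \<in> {u, w} \<longrightarrow> f (c, (src Q c, [])) = 0"
    and bc: "b \<in> arrs Q" "c \<in> arrs Q" "tgt Q c \<in> {u, w}" "src Q b \<in> {u, w}" "tgt Q c \<noteq> src Q b"
  shows "der_path (glue_quiver Q u w) (glue_rels Q Z u w) (psi1 u w f) (gluev u w (src Q c), [c, b]) q = 0"
  unfolding der_path_def
proof (rule sum.neutral, rule ballI)
  fix x assume "x \<in> {x. psi1 u w f x \<noteq> 0}"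
  then obtain a \<gamma>' where x: "x = (a, \<gamma>')" and "psi1 u w f (a, \<gamma>') \<noteq> 0" by (cases x) auto
  then obtain \<gamma> where "f (a, \<gamma>) \<noteq> 0" "\<gamma>' = glue_path u w \<gamma>"
    by (auto simp: psi1_slice dest: pushforward_nonzeroD)
  then show "psi1 u w f x * repl_coeff (glue_quiver Q u w) (glue_rels Q Z u w)
      (gluev u w (src Q c), [c, b]) (fst x) (snd x) q = 0"
    using repl_coeff_new_rel_eq_0[OF f _ loops bc] x by simp
qed

lemma psi1_in_cochains1:
  assumes f: "f \<in> cochains1 Q Z"
  shows "psi1 u w f \<in> cochains1 (glue_quiver Q u w) (glue_rels Q Z u w)"
proof -
  have "finite {x. psi1 u w f x \<noteq> 0}"
    using f by (simp add: psi1_eq_pushforward finite_support_pushforward cochains1_def)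
  moreover have "a \<in> arrs (glue_quiver Q u w) \<and> q \<in> basis_paths (glue_quiver Q u w) (glue_rels Q Z u w)
      \<and> parallel (glue_quiver Q u w) (arrow_path (glue_quiver Q u w) a) q"
    if psi: "psi1 u w f (a, q) \<noteq> 0" for a q
  proof -
    obtain \<gamma> where nz: "f (a, \<gamma>) \<noteq> 0" and q: "q = glue_path u w \<gamma>"
      using psi pushforward_nonzeroD[of "glue_path u w" "\<lambda>p. f (a, p)" q] unfolding psi1_slice by blast
    show ?thesis
      using cochains1D[OF f nz] glue_path_in_basis_iff[of Q \<gamma> u w Z] unfolding q
      by (simp add: parallel_arrow_path_iff ptgt_glue_path) (simp add: glue_quiver_def glue_path_def)
  qed
  ultimately show ?thesis by (auto simp: cochains1_def)
qed

lemma psi1_in_ker1: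
  assumes mono: "monomial Q Z" and f: "f \<in> ker1 Q Z"
    and loops: "\<forall>c\<in>arrs Q. src Q c = tgt Q c \<and> src Q c \<in> {u, w} \<longrightarrow> f (c, (src Q c, [])) = 0"
  shows "psi1 u w f \<in> ker1 (glue_quiver Q u w) (glue_rels Q Z u w)"
proof -
  have fc: "f \<in> cochains1 Q Z" using f by (simp add: ker1_def)
  have "der_path (glue_quiver Q u w) (glue_rels Q Z u w) (psi1 u w f) r q = 0"
    if "r \<in> glue_rels Q Z u w" for r q
  proof -
    from that consider (old) r0 where "r0 \<in> Z" "r = glue_path u w r0"
      | (new) b c where "r = (gluev u w (src Q c), [c, b])" "b \<in> arrs Q" "c \<in> arrs Q"
          "tgt Q c \<in> {u, w}" "src Q b \<in> {u, w}" "tgt Q c \<noteq> src Q b"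
      unfolding glue_rels_def by blast
    then show ?thesis
    proof cases
      case old
      have "is_path Q r0" using mono old(1) by (simp add: monomial_def)
      then show ?thesis using old ker1_der_path_rel_eq_0[OF f] by (simp add: der_path_glue_path[OF fc])
    next
      case new
      then show ?thesis using der_path_new_rel_eq_0[OF fc loops new(2-6)] by simp
    qed
  qed
  then show ?thesis using psi1_in_cochains1[OF fc] by (auto simp: ker1_def delta1_def)
qed

lemma cochain_eq_psi1:
  assumes f: "f \<in> cochains1 Q Z"
  shows "f (a, p) = (if fst p = src Q a then psi1 u w f (a, glue_path u w p) else 0)"
proof (cases "fst p = src Q a")
  case True
  have "psi1 u w f (a, glue_path u w p) = (\<Sum>p' | glue_path u w p' = glue_path u w p. f (a, p'))"
    by (rule psi1_eq_sum_fibre)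
  also have "\<dots> = (\<Sum>p'\<in>{p}. f (a, p'))"
  proof (rule sum.mono_neutral_right)
    show "\<forall>p'\<in>{p'. glue_path u w p' = glue_path u w p} - {p}. f (a, p') = 0"
      using cochains1D(4)[OF f] True by (auto simp: glue_path_def prod_eq_iff)
  qed (simp_all add: finite_glue_path_fibre)
  finally show ?thesis using True by simp
next
  case False
  then show ?thesis using cochains1D(4)[OF f, of a p] by auto
qed

lemma inj_on_psi1: "inj_on (psi1 u w) (cochains1 Q Z)"
proof (rule inj_onI, rule ext)
  fix f g x assume "f \<in> cochains1 Q Z" "g \<in> cochains1 Q Z" "psi1 u w f = psi1 u w g"
  then show "f x = g x"
    using cochain_eq_psi1[of f Q Z "fst x" "snd x" u w] cochain_eq_psi1[of g Q Z "fst x" "snd x" u w] by simp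
qed

lemma der_glue_psi1_slice:
  assumes f: "f \<in> cochains1 Q Z" and g: "g \<in> cochains1 Q Z"
  shows "der (glue_quiver Q u w) (glue_rels Q Z u w) (psi1 u w f) (\<lambda>e. psi1 u w g (x, e))
       = pushforward (glue_path u w) (der Q Z f (\<lambda>p. g (x, p)))"
  using der_glue_pushforward[OF f finite_cochain_slice[OF g] cochains1D(3)[OF g]]
  by (simp add: psi1_slice)

lemma psi1_bracket:
  assumes f: "f \<in> cochains1 Q Z" and g: "g \<in> cochains1 Q Z"
  shows "psi1 u w (bracket Q Z f g)
       = bracket (glue_quiver Q u w) (glue_rels Q Z u w) (psi1 u w f) (psi1 u w g)"
proof (rule ext, clarify)
  fix x q
  have "psi1 u w (bracket Q Z f g) (x, q)
      = (\<Sum>p | glue_path u w p = q. der Q Z f (\<lambda>e. g (x, e)) p - der Q Z g (\<lambda>e. f (x, e)) p)"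
    by (simp add: psi1_eq_sum_fibre bracket_def)
  also have "\<dots> = pushforward (glue_path u w) (der Q Z f (\<lambda>e. g (x, e))) q
      - pushforward (glue_path u w) (der Q Z g (\<lambda>e. f (x, e))) q"
    by (simp add: pushforward_eq_sum_fibre finite_glue_path_fibre sum_subtractf)
  also have "\<dots> = bracket (glue_quiver Q u w) (glue_rels Q Z u w) (psi1 u w f) (psi1 u w g) (x, q)"
    by (simp add: bracket_def der_glue_psi1_slice f g)
  finally show "psi1 u w (bracket Q Z f g) (x, q)
      = bracket (glue_quiver Q u w) (glue_rels Q Z u w) (psi1 u w f) (psi1 u w g) (x, q)" .
qed

lemma psi1_ppow:
  assumes mono: "monomial Q Z" and f: "f \<in> cochains1 Q Z"
  shows "psi1 u w (ppow Q Z n f) = ppow (glue_quiver Q u w) (glue_rels Q Z u w) n (psi1 u w f)"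
proof (rule ext, clarify)
  fix x q
  have "psi1 u w (ppow Q Z n f) (x, q) = pushforward (glue_path u w) ((der Q Z f ^^ (n - 1)) (\<lambda>p. f (x, p))) q"
    by (simp add: psi1_slice ppow_def)
  also have "\<dots> = (der (glue_quiver Q u w) (glue_rels Q Z u w) (psi1 u w f) ^^ (n - 1))
      (pushforward (glue_path u w) (\<lambda>p. f (x, p))) q"
    by (simp add: funpow_der_glue_pushforward[OF mono f finite_cochain_slice[OF f] cochains1D(3)[OF f]])
  also have "\<dots> = ppow (glue_quiver Q u w) (glue_rels Q Z u w) n (psi1 u w f) (x, q)"
    by (simp add: ppow_def psi1_slice)
  finally show "psi1 u w (ppow Q Z n f) (x, q) = ppow (glue_quiver Q u w) (glue_rels Q Z u w) n (psi1 u w f) (x, q)" .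
qed

theorem proposition3p12:
  fixes Q :: "('v, 'a) quiver" and Z :: "('v, 'a) qpath set" and u w :: 'v
  assumes mono: "monomial Q Z"
    and u: "u \<in> verts Q" and w: "w \<in> verts Q" and uw: "u \<noteq> w"
    and niu: "non_isolated Q u" and niw: "non_isolated Q w"
    and loops: "\<forall>\<alpha>\<in>arrs Q. \<forall>m::nat. 2 \<le> m \<and> src Q \<alpha> = tgt Q \<alpha> \<and> src Q \<alpha> \<in> {u, w}
                   \<and> (src Q \<alpha>, replicate m \<alpha>) \<in> Z \<longrightarrow> \<not> CHAR('k::field) dvd m"
  defines "KA \<equiv> (ker1 Q Z :: ('a \<times> ('v, 'a) qpath \<Rightarrow> 'k) set)"
    and "KB \<equiv> (ker1 (glue_quiver Q u w) (glue_rels Q Z u w) :: ('a \<times> ('v, 'a) qpath \<Rightarrow> 'k) set)"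
  shows "(\<forall>f\<in>KA. psi1 u w f \<in> KB)
    \<and> inj_on (psi1 u w) KA
    \<and> (\<forall>f\<in>KA. \<forall>g\<in>KA. psi1 u w (\<lambda>x. f x + g x) = (\<lambda>x. psi1 u w f x + psi1 u w g x))
    \<and> (\<forall>f\<in>KA. \<forall>c::'k. psi1 u w (\<lambda>x. c * f x) = (\<lambda>x. c * psi1 u w f x))
    \<and> (\<forall>f\<in>KA. \<forall>g\<in>KA. psi1 u w (bracket Q Z f g) = bracket (glue_quiver Q u w) (glue_rels Q Z u w) (psi1 u w f) (psi1 u w g))
    \<and> (0 < CHAR('k) \<longrightarrow>
        (\<forall>f\<in>KA. psi1 u w (ppow Q Z CHAR('k) f) = ppow (glue_quiver Q u w) (glue_rels Q Z u w) CHAR('k) (psi1 u w f)))"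
proof -
  have cochains: "KA \<subseteq> cochains1 Q Z" by (auto simp: KA_def ker1_def)
  have "psi1 u w f \<in> KB" if f: "f \<in> KA" for f
    unfolding KB_def
  proof (rule psi1_in_ker1[OF mono])
    show "f \<in> ker1 Q Z" using f by (simp add: KA_def)
    then show "\<forall>c\<in>arrs Q. src Q c = tgt Q c \<and> src Q c \<in> {u, w} \<longrightarrow> f (c, (src Q c, [])) = 0"
      using ker1_loop_vanishes[OF mono] loops by blast
  qed
  moreover have "inj_on (psi1 u w) KA"
    using inj_on_psi1 cochains by (rule inj_on_subset)
  moreover have "psi1 u w (bracket Q Z f g)
      = bracket (glue_quiver Q u w) (glue_rels Q Z u w) (psi1 u w f) (psi1 u w g)"
    if "f \<in> KA" "g \<in> KA" for f g
    using that cochains by (intro psi1_bracket) auto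
  moreover have "psi1 u w (ppow Q Z n f) = ppow (glue_quiver Q u w) (glue_rels Q Z u w) n (psi1 u w f)"
    if "f \<in> KA" for f n
    using that cochains by (intro psi1_ppow[OF mono]) auto
  ultimately show ?thesis by (simp add: psi1_add psi1_scale)
qed

end
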